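(* Let $m\ge n\ge3$ be integers. If $Q\in\mathfrak{C}^0_{(m)}$, then $Q\in\mathfrak{C}^0_{(n)}$. If $Q\in\mathfrak{C}^{0,\alpha}_{(m)}$, then $Q\in\mathfrak{C}^{0,\alpha}_{(n)}$.
   Context: Fix $\mathsf{a}>0$, $\Xi_0>0$, $R_0=\mathsf{a}\Xi_0$, and $\alpha\in(0,1)$. For integer $n\ge3$ and $\Xi>0$, $B^{(n)}(\Xi)$ is the open ball of radius $\Xi$ in $\mathbb{R}^n$. For $f$ on $\bar B^{(n)}(\Xi)$: $\|f;C^0\|=\sup|f|$ and $\|f;C^{0,\alpha}\|=\sup|f|+\sup\{|f(\xi')-f(\xi)|/|\xi'-\xi|^\alpha:\ \xi,\xi'\in\bar B^{(n)}(\Xi),\ 0<|\xi'-\xi|\le1\}$. For a function $Q$ of $(\varpi,z)$, $\varpi\ge0$, set $Q^{\flat(n)}(\xi)=Q(\mathsf{a}\sqrt{\xi_1^2+\dots+\xi_{n-1}^2},\mathsf{a}\xi_n)$, and $r=\sqrt{\varpi^2+z^2}$. Kelvin transform: $\xi^\star=(\Xi_0/|\xi|)^2\xi$, $f_{\star(n)}(\xi^\star)=(|\xi|/\Xi_0)^{n-2}f(\xi)$. $\mathfrak{C}^{0}(\bar{\mathfrak{D}}(R))$ (resp. $\mathfrak{C}^{0,\alpha}(\bar{\mathfrak{D}}(R))$): continuous $Q$ on $\{r\le R\}$, even in $z$, with $Q^{\flat(n)}\in C^0(\bar B^{(n)}(R/\mathsf{a}))$ (resp. $C^{0,\alpha}$),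 norm that of $Q^{\flat(n)}$ (independent of $n$). $\mathfrak{C}^0_{(n)}(\overline{\mathfrak{D}^{c}}(R_0))$ (resp. $\mathfrak{C}^{0,\alpha}_{(n)}(\overline{\mathfrak{D}^{c}}(R_0))$): $Q$ on $\{r\ge R_0\}$, even in $z$, such that $(Q^{\flat(n)})_{\star(n)}$ on $\bar B^{(n)}(\Xi_0)\setminus\{0\}$ is the restriction of some $F\in C^0(\bar B^{(n)}(\Xi_0))$ (resp. $C^{0,\alpha}$); norm that of $F$. Cut-off $\chi\in C^\infty(\mathbb{R})$ with $\chi(t)=1$ for $t\le1$, $0<\chi<1$ on $(1,2)$, $\chi(t)=0$ for $t\ge2$; $Q^{[0]}=\chi(r/R_0)Q$, $Q^{[\infty]}=(1-\chi(r/R_0))Q$. $\mathfrak{C}^0_{(n)}$ (resp. $\mathfrak{C}^{0,\alpha}_{(n)}$): $Q$ even in $z$ with $Q^{[0]}\in\mathfrak{C}^0(\bar{\mathfrak{D}}(2R_0))$ and $Q^{[\infty]}\in\mathfrak{C}^0_{(n)}(\overline{\mathfrak{D}^c}(R_0))$ (resp. with $0,\alpha$), norm the maximum of the two norms. *)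

theory Defs
  imports "HOL-Analysis.Analysis"
begin

text \<open>Points of R^n are encoded as functions nat => real supported on {..<n};
  coordinate xi_k of the paper is component k-1.\<close>

definition enorm :: "nat \<Rightarrow> (nat \<Rightarrow> real) \<Rightarrow> real" where
  "enorm n \<xi> = sqrt (\<Sum>i<n. (\<xi> i)\<^sup>2)"

definition edist :: "nat \<Rightarrow> (nat \<Rightarrow> real) \<Rightarrow> (nat \<Rightarrow> real) \<Rightarrow> real" where
  "edist n \<xi> \<eta> = enorm n (\<lambda>i. \<xi> i - \<eta> i)"

definition cballn :: "nat \<Rightarrow> real \<Rightarrow> (nat \<Rightarrow> real) set" where
  "cballn n \<Xi> = {\<xi>. (\<forall>i\<ge>n. \<xi> i = 0) \<and> enorm n \<xi> \<le> \<Xi>}"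

definition C0 :: "nat \<Rightarrow> real \<Rightarrow> ((nat \<Rightarrow> real) \<Rightarrow> real) \<Rightarrow> bool" where
  "C0 n \<Xi> f \<longleftrightarrow>
     (\<exists>M. \<forall>\<xi>\<in>cballn n \<Xi>. \<bar>f \<xi>\<bar> \<le> M) \<and>
     (\<forall>\<xi>\<in>cballn n \<Xi>. \<forall>\<epsilon>>0. \<exists>\<delta>>0. \<forall>\<eta>\<in>cballn n \<Xi>.
        edist n \<eta> \<xi> < \<delta> \<longrightarrow> \<bar>f \<eta> - f \<xi>\<bar> < \<epsilon>)"

definition C0a :: "real \<Rightarrow> nat \<Rightarrow> real \<Rightarrow> ((nat \<Rightarrow> real) \<Rightarrow> real) \<Rightarrow> bool" where
  "C0a \<alpha> n \<Xi> f \<longleftrightarrow>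
     (\<exists>M. \<forall>\<xi>\<in>cballn n \<Xi>. \<bar>f \<xi>\<bar> \<le> M) \<and>
     (\<exists>H. \<forall>\<xi>\<in>cballn n \<Xi>. \<forall>\<xi>'\<in>cballn n \<Xi>.
        0 < edist n \<xi>' \<xi> \<and> edist n \<xi>' \<xi> \<le> 1 \<longrightarrow>
        \<bar>f \<xi>' - f \<xi>\<bar> \<le> H * (edist n \<xi>' \<xi>) powr \<alpha>)"

definition flat :: "real \<Rightarrow> nat \<Rightarrow> (real \<Rightarrow> real \<Rightarrow> real) \<Rightarrow> (nat \<Rightarrow> real) \<Rightarrow> real" where
  "flat a n Q \<xi> = Q (a * sqrt (\<Sum>i<n - 1. (\<xi> i)\<^sup>2)) (a * \<xi> (n - 1))"

text \<open>Kelvin transform: f_star(eta) = (|xi|/Xi0)^(n-2) f(xi) where eta = xi^star,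
  i.e. xi = (Xi0/|eta|)^2 eta and |xi|/Xi0 = Xi0/|eta|.\<close>
definition kelvin :: "real \<Rightarrow> nat \<Rightarrow> ((nat \<Rightarrow> real) \<Rightarrow> real) \<Rightarrow> (nat \<Rightarrow> real) \<Rightarrow> real" where
  "kelvin \<Xi>0 n f \<eta> = (\<Xi>0 / enorm n \<eta>) ^ (n - 2) * f (\<lambda>i. (\<Xi>0 / enorm n \<eta>)\<^sup>2 * \<eta> i)"

definition even_z :: "(real \<Rightarrow> real \<Rightarrow> real) \<Rightarrow> bool" where
  "even_z Q \<longleftrightarrow> (\<forall>w\<ge>0. \<forall>z. Q w (-z) = Q w z)"

definition CD0 :: "real \<Rightarrow> nat \<Rightarrow> real \<Rightarrow> (real \<Rightarrow> real \<Rightarrow> real) \<Rightarrow> bool" where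
  "CD0 a n R Q \<longleftrightarrow>
     continuous_on {(w, z). 0 \<le> w \<and> sqrt (w\<^sup>2 + z\<^sup>2) \<le> R} (\<lambda>(w, z). Q w z) \<and>
     even_z Q \<and> C0 n (R / a) (flat a n Q)"

definition CDa :: "real \<Rightarrow> real \<Rightarrow> nat \<Rightarrow> real \<Rightarrow> (real \<Rightarrow> real \<Rightarrow> real) \<Rightarrow> bool" where
  "CDa \<alpha> a n R Q \<longleftrightarrow>
     continuous_on {(w, z). 0 \<le> w \<and> sqrt (w\<^sup>2 + z\<^sup>2) \<le> R} (\<lambda>(w, z). Q w z) \<and>
     even_z Q \<and> C0a \<alpha> n (R / a) (flat a n Q)"

text \<open>exterior spaces frak C^0_(n)(bar D^c(R0)), frak C^{0,alpha}_(n)(bar D^c(R0)), R0 = a Xi0\<close>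
definition CE0 :: "real \<Rightarrow> real \<Rightarrow> nat \<Rightarrow> (real \<Rightarrow> real \<Rightarrow> real) \<Rightarrow> bool" where
  "CE0 a \<Xi>0 n Q \<longleftrightarrow> even_z Q \<and>
     (\<exists>F. C0 n \<Xi>0 F \<and>
        (\<forall>\<eta>\<in>cballn n \<Xi>0. enorm n \<eta> \<noteq> 0 \<longrightarrow> F \<eta> = kelvin \<Xi>0 n (flat a n Q) \<eta>))"

definition CEa :: "real \<Rightarrow> real \<Rightarrow> real \<Rightarrow> nat \<Rightarrow> (real \<Rightarrow> real \<Rightarrow> real) \<Rightarrow> bool" where
  "CEa \<alpha> a \<Xi>0 n Q \<longleftrightarrow> even_z Q \<and>
     (\<exists>F. C0a \<alpha> n \<Xi>0 F \<and>
        (\<forall>\<eta>\<in>cballn n \<Xi>0. enorm n \<eta> \<noteq> 0 \<longrightarrow> F \<eta> = kelvin \<Xi>0 n (flat a n Q) \<eta>))"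

definition cut0 :: "(real \<Rightarrow> real) \<Rightarrow> real \<Rightarrow> (real \<Rightarrow> real \<Rightarrow> real) \<Rightarrow> real \<Rightarrow> real \<Rightarrow> real" where
  "cut0 chi R0 Q w z = chi (sqrt (w\<^sup>2 + z\<^sup>2) / R0) * Q w z"

definition cutinf :: "(real \<Rightarrow> real) \<Rightarrow> real \<Rightarrow> (real \<Rightarrow> real \<Rightarrow> real) \<Rightarrow> real \<Rightarrow> real \<Rightarrow> real" where
  "cutinf chi R0 Q w z = (1 - chi (sqrt (w\<^sup>2 + z\<^sup>2) / R0)) * Q w z"

definition Cn0 :: "(real \<Rightarrow> real) \<Rightarrow> real \<Rightarrow> real \<Rightarrow> nat \<Rightarrow> (real \<Rightarrow> real \<Rightarrow> real) \<Rightarrow> bool" where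
  "Cn0 chi a \<Xi>0 n Q \<longleftrightarrow> even_z Q \<and>
     CD0 a n (2 * (a * \<Xi>0)) (cut0 chi (a * \<Xi>0) Q) \<and>
     CE0 a \<Xi>0 n (cutinf chi (a * \<Xi>0) Q)"

definition Cna :: "real \<Rightarrow> (real \<Rightarrow> real) \<Rightarrow> real \<Rightarrow> real \<Rightarrow> nat \<Rightarrow> (real \<Rightarrow> real \<Rightarrow> real) \<Rightarrow> bool" where
  "Cna \<alpha> chi a \<Xi>0 n Q \<longleftrightarrow> even_z Q \<and>
     CDa \<alpha> a n (2 * (a * \<Xi>0)) (cut0 chi (a * \<Xi>0) Q) \<and>
     CEa \<alpha> a \<Xi>0 n (cutinf chi (a * \<Xi>0) Q)"

definition cutoff :: "(real \<Rightarrow> real) \<Rightarrow> bool" where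
  "cutoff chi \<longleftrightarrow> (\<forall>k x. (deriv ^^ k) chi differentiable (at x)) \<and>
     (\<forall>t\<le>1. chi t = 1) \<and> (\<forall>t. 1 < t \<and> t < 2 \<longrightarrow> 0 < chi t \<and> chi t < 1) \<and>
     (\<forall>t\<ge>2. chi t = 0)"

end

theory Submission
  imports Defs
begin

text \<open>Embed \<open>R^n\<close> into \<open>R^m\<close> by keeping the first \<open>n - 1\<close> coordinates and moving the
  last one to position \<open>m\<close>. This is an isometry that preserves both the distance to the axis
  and the axial coordinate, so the flat extension of \<open>Q\<close> in dimension \<open>m\<close> restricts to the one
  in dimension \<open>n\<close>, and the interior conditions pass from \<open>m\<close> to \<open>n\<close>. The Kelvin transforms in
  the two dimensions differ by the factor \<open>(|\<eta>| / \<Xi>0)^(m - n)\<close>, which is bounded by 1 and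
  Lipschitz on the ball; multiplication by such a factor preserves \<open>C^0\<close> and \<open>C^{0,\<alpha>}\<close>, so the
  exterior conditions pass from \<open>m\<close> to \<open>n\<close> as well.\<close>

definition embed_dim :: "nat \<Rightarrow> nat \<Rightarrow> (nat \<Rightarrow> real) \<Rightarrow> nat \<Rightarrow> real" where
  "embed_dim n m \<xi> i = (if i < n - 1 then \<xi> i else if i = m - 1 then \<xi> (n - 1) else 0)"

lemma embed_dim_last:
  assumes "1 \<le> n" "n \<le> m"
  shows "embed_dim n m \<xi> (m - 1) = \<xi> (n - 1)"
  using assms by (simp add: embed_dim_def)

lemma sum_squares_embed_dim:
  assumes "1 \<le> n" "n \<le> m"
  shows "(\<Sum>i<m - 1. (embed_dim n m \<xi> i)\<^sup>2) = (\<Sum>i<n - 1. (\<xi> i)\<^sup>2)"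
proof -
  have "(\<Sum>i<m - 1. (embed_dim n m \<xi> i)\<^sup>2) = (\<Sum>i<n - 1. (embed_dim n m \<xi> i)\<^sup>2)"
    by (rule sum.mono_neutral_right) (use assms in \<open>auto simp: embed_dim_def\<close>)
  then show ?thesis
    by (simp add: embed_dim_def)
qed

lemma enorm_embed_dim:
  assumes "1 \<le> n" "n \<le> m"
  shows "enorm m (embed_dim n m \<xi>) = enorm n \<xi>"
proof -
  have m: "m = Suc (m - 1)" and n: "n = Suc (n - 1)"
    using assms by auto
  have "(\<Sum>i<m. (embed_dim n m \<xi> i)\<^sup>2) = (\<Sum>i<m - 1. (embed_dim n m \<xi> i)\<^sup>2) + (embed_dim n m \<xi> (m - 1))\<^sup>2"
    by (subst m, subst sum.lessThan_Suc) simp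
  also have "\<dots> = (\<Sum>i<n - 1. (\<xi> i)\<^sup>2) + (\<xi> (n - 1))\<^sup>2"
    using sum_squares_embed_dim[OF assms] embed_dim_last[OF assms] by simp
  also have "\<dots> = (\<Sum>i<n. (\<xi> i)\<^sup>2)"
    by (subst (2) n, subst sum.lessThan_Suc) simp
  finally show ?thesis
    unfolding enorm_def by simp
qed

lemma flat_embed_dim:
  assumes "1 \<le> n" "n \<le> m"
  shows "flat a m Q (embed_dim n m \<xi>) = flat a n Q \<xi>"
  unfolding flat_def using sum_squares_embed_dim[OF assms] embed_dim_last[OF assms] by simp

lemma embed_dim_diff: "(\<lambda>i. embed_dim n m \<xi> i - embed_dim n m \<eta> i) = embed_dim n m (\<lambda>i. \<xi> i - \<eta> i)"
  by (rule ext) (simp add: embed_dim_def)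

lemma embed_dim_scale: "(\<lambda>i. c * embed_dim n m \<xi> i) = embed_dim n m (\<lambda>i. c * \<xi> i)"
  by (rule ext) (simp add: embed_dim_def)

lemma edist_embed_dim:
  assumes "1 \<le> n" "n \<le> m"
  shows "edist m (embed_dim n m \<xi>) (embed_dim n m \<eta>) = edist n \<xi> \<eta>"
  unfolding edist_def embed_dim_diff using enorm_embed_dim[OF assms] by simp

lemma embed_dim_in_cballn:
  assumes "1 \<le> n" "n \<le> m" "\<xi> \<in> cballn n R"
  shows "embed_dim n m \<xi> \<in> cballn m R"
  using assms enorm_embed_dim[OF assms(1,2)] unfolding cballn_def by (auto simp: embed_dim_def)

lemma C0_comp_embed_dim:
  assumes "1 \<le> n" "n \<le> m" "C0 m R f"
  shows "C0 n R (\<lambda>\<xi>. f (embed_dim n m \<xi>))"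
  using assms(3) embed_dim_in_cballn[OF assms(1,2)] edist_embed_dim[OF assms(1,2)]
  unfolding C0_def by metis

lemma C0a_comp_embed_dim:
  assumes "1 \<le> n" "n \<le> m" "C0a \<alpha> m R f"
  shows "C0a \<alpha> n R (\<lambda>\<xi>. f (embed_dim n m \<xi>))"
  using assms(3) embed_dim_in_cballn[OF assms(1,2)] edist_embed_dim[OF assms(1,2)]
  unfolding C0a_def by metis

lemma enorm_nonneg: "0 \<le> enorm n \<xi>"
  unfolding enorm_def by (simp add: sum_nonneg)

lemma edist_nonneg: "0 \<le> edist n \<xi> \<eta>"
  unfolding edist_def by (rule enorm_nonneg)

lemma enorm_diff_le_edist: "\<bar>enorm n \<xi> - enorm n \<eta>\<bar> \<le> edist n \<xi> \<eta>"
proof -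
  have enorm_L2: "enorm n \<zeta> = L2_set \<zeta> {..<n}" for \<zeta>
    unfolding enorm_def L2_set_def by simp
  have "edist n \<xi> \<eta> = L2_set (\<lambda>i. \<xi> i - \<eta> i) {..<n}"
    unfolding edist_def enorm_L2 ..
  moreover have "edist n \<xi> \<eta> = L2_set (\<lambda>i. \<eta> i - \<xi> i) {..<n}"
    unfolding edist_def enorm_def L2_set_def by (simp add: power2_commute)
  moreover have "L2_set \<xi> {..<n} \<le> L2_set (\<lambda>i. \<xi> i - \<eta> i) {..<n} + L2_set \<eta> {..<n}"
    using L2_set_triangle_ineq[of "\<lambda>i. \<xi> i - \<eta> i" \<eta> "{..<n}"] by simp
  moreover have "L2_set \<eta> {..<n} \<le> L2_set (\<lambda>i. \<eta> i - \<xi> i) {..<n} + L2_set \<xi> {..<n}"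
    using L2_set_triangle_ineq[of "\<lambda>i. \<eta> i - \<xi> i" \<xi> "{..<n}"] by simp
  ultimately show ?thesis
    unfolding enorm_L2 by linarith
qed

lemma abs_mult_diff_le:
  fixes a b c d :: real
  assumes "\<bar>a - c\<bar> \<le> L" "\<bar>b\<bar> \<le> M" "\<bar>c\<bar> \<le> B"
  shows "\<bar>a * b - c * d\<bar> \<le> L * M + B * \<bar>b - d\<bar>"
proof -
  have "\<bar>a * b - c * d\<bar> = \<bar>(a - c) * b + c * (b - d)\<bar>"
    by (simp add: algebra_simps)
  also have "\<dots> \<le> \<bar>a - c\<bar> * \<bar>b\<bar> + \<bar>c\<bar> * \<bar>b - d\<bar>"
    by (metis abs_mult abs_triangle_ineq)
  also have "\<dots> \<le> L * M + B * \<bar>b - d\<bar>"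
    using assms by (intro add_mono mult_mono) auto
  finally show ?thesis .
qed

lemma C0_lipschitz_mult:
  assumes f: "C0 n R f"
    and g_bound: "\<And>\<xi>. \<xi> \<in> cballn n R \<Longrightarrow> \<bar>g \<xi>\<bar> \<le> B"
    and g_lip: "\<And>\<xi> \<eta>. \<xi> \<in> cballn n R \<Longrightarrow> \<eta> \<in> cballn n R \<Longrightarrow> \<bar>g \<eta> - g \<xi>\<bar> \<le> L * edist n \<eta> \<xi>"
    and "0 \<le> L"
  shows "C0 n R (\<lambda>\<xi>. g \<xi> * f \<xi>)"
proof -
  obtain M where M: "\<And>\<xi>. \<xi> \<in> cballn n R \<Longrightarrow> \<bar>f \<xi>\<bar> \<le> M"
    using f unfolding C0_def by blast
  have "\<exists>\<delta>>0. \<forall>\<eta>\<in>cballn n R. edist n \<eta> \<xi> < \<delta> \<longrightarrow> \<bar>g \<eta> * f \<eta> - g \<xi> * f \<xi>\<bar> < \<epsilon>"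
    if \<xi>: "\<xi> \<in> cballn n R" and "\<epsilon> > 0" for \<xi> \<epsilon>
  proof -
    define K where "K = L * M + B + 1"
    have "0 \<le> B" "0 \<le> M"
      using g_bound[OF \<xi>] M[OF \<xi>] by linarith+
    then have "K > 0"
      using \<open>0 \<le> L\<close> mult_nonneg_nonneg[of L M] unfolding K_def by linarith
    then have "\<epsilon> / (2 * K) > 0"
      using \<open>\<epsilon> > 0\<close> by simp
    then obtain \<delta> where "\<delta> > 0"
      and \<delta>: "\<And>\<eta>. \<eta> \<in> cballn n R \<Longrightarrow> edist n \<eta> \<xi> < \<delta> \<Longrightarrow> \<bar>f \<eta> - f \<xi>\<bar> < \<epsilon> / (2 * K)"
      using f \<xi> unfolding C0_def by blast
    have "\<bar>g \<eta> * f \<eta> - g \<xi> * f \<xi>\<bar> < \<epsilon>"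
      if \<eta>: "\<eta> \<in> cballn n R" and close: "edist n \<eta> \<xi> < min \<delta> (\<epsilon> / (2 * K))" for \<eta>
    proof -
      have "\<bar>g \<eta> * f \<eta> - g \<xi> * f \<xi>\<bar> \<le> L * edist n \<eta> \<xi> * M + B * \<bar>f \<eta> - f \<xi>\<bar>"
        using g_lip[OF \<xi> \<eta>] M[OF \<eta>] g_bound[OF \<xi>] by (rule abs_mult_diff_le)
      also have "\<dots> \<le> K * edist n \<eta> \<xi> + K * \<bar>f \<eta> - f \<xi>\<bar>"
        unfolding K_def using \<open>0 \<le> B\<close> \<open>0 \<le> M\<close> \<open>0 \<le> L\<close> edist_nonneg[of n \<eta> \<xi>]
        by (intro add_mono mult_right_mono) (auto simp: algebra_simps)
      also have "\<dots> < K * (\<epsilon> / (2 * K)) + K * (\<epsilon> / (2 * K))"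
        using close \<delta>[OF \<eta>] \<open>K > 0\<close> by (intro add_strict_mono mult_strict_left_mono) auto
      also have "\<dots> = \<epsilon>"
        using \<open>K > 0\<close> by simp
      finally show ?thesis .
    qed
    then show ?thesis
      using \<open>\<delta> > 0\<close> \<open>\<epsilon> > 0\<close> \<open>K > 0\<close> by (intro exI[of _ "min \<delta> (\<epsilon> / (2 * K))"]) auto
  qed
  moreover have "\<bar>g \<xi> * f \<xi>\<bar> \<le> B * M" if "\<xi> \<in> cballn n R" for \<xi>
    using g_bound[OF that] M[OF that] by (simp add: abs_mult mult_mono')
  ultimately show ?thesis
    unfolding C0_def by blast
qed

lemma C0a_lipschitz_mult:
  assumes f: "C0a \<alpha> n R f"
    and g_bound: "\<And>\<xi>. \<xi> \<in> cballn n R \<Longrightarrow> \<bar>g \<xi>\<bar> \<le> B"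
    and g_lip: "\<And>\<xi> \<eta>. \<xi> \<in> cballn n R \<Longrightarrow> \<eta> \<in> cballn n R \<Longrightarrow> \<bar>g \<eta> - g \<xi>\<bar> \<le> L * edist n \<eta> \<xi>"
    and "0 \<le> L" "\<alpha> \<le> 1"
  shows "C0a \<alpha> n R (\<lambda>\<xi>. g \<xi> * f \<xi>)"
proof -
  obtain M where M: "\<And>\<xi>. \<xi> \<in> cballn n R \<Longrightarrow> \<bar>f \<xi>\<bar> \<le> M"
    using f unfolding C0a_def by blast
  obtain H where H: "\<And>\<xi> \<eta>. \<xi> \<in> cballn n R \<Longrightarrow> \<eta> \<in> cballn n R \<Longrightarrow>
      0 < edist n \<eta> \<xi> \<Longrightarrow> edist n \<eta> \<xi> \<le> 1 \<Longrightarrow> \<bar>f \<eta> - f \<xi>\<bar> \<le> H * edist n \<eta> \<xi> powr \<alpha>"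
    using f unfolding C0a_def by blast
  have "\<bar>g \<eta> * f \<eta> - g \<xi> * f \<xi>\<bar> \<le> (L * M + B * H) * edist n \<eta> \<xi> powr \<alpha>"
    if \<xi>: "\<xi> \<in> cballn n R" and \<eta>: "\<eta> \<in> cballn n R"
      and d: "0 < edist n \<eta> \<xi>" "edist n \<eta> \<xi> \<le> 1" for \<xi> \<eta>
  proof -
    let ?d = "edist n \<eta> \<xi>"
    have "0 \<le> B" "0 \<le> M"
      using g_bound[OF \<xi>] M[OF \<xi>] by linarith+
    have "?d \<le> ?d powr \<alpha>"
      using powr_mono'[of \<alpha> 1 ?d] d \<open>\<alpha> \<le> 1\<close> by simp
    have "\<bar>g \<eta> * f \<eta> - g \<xi> * f \<xi>\<bar> \<le> L * ?d * M + B * \<bar>f \<eta> - f \<xi>\<bar>"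
      using g_lip[OF \<xi> \<eta>] M[OF \<eta>] g_bound[OF \<xi>] by (rule abs_mult_diff_le)
    also have "\<dots> \<le> L * ?d powr \<alpha> * M + B * (H * ?d powr \<alpha>)"
      using \<open>?d \<le> ?d powr \<alpha>\<close> H[OF \<xi> \<eta> d] \<open>0 \<le> B\<close> \<open>0 \<le> M\<close> \<open>0 \<le> L\<close>
      by (intro add_mono mult_left_mono mult_right_mono) auto
    finally show ?thesis
      by (simp add: algebra_simps)
  qed
  moreover have "\<bar>g \<xi> * f \<xi>\<bar> \<le> B * M" if "\<xi> \<in> cballn n R" for \<xi>
    using g_bound[OF that] M[OF that] by (simp add: abs_mult mult_mono')
  ultimately show ?thesis
    unfolding C0a_def by blast
qed

lemma radial_power_le_one:
  assumes "\<Xi>0 > 0" "\<xi> \<in> cballn n \<Xi>0"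
  shows "\<bar>(enorm n \<xi> / \<Xi>0) ^ k\<bar> \<le> 1"
  using assms enorm_nonneg[of n \<xi>] unfolding cballn_def by (simp add: power_le_one)

lemma radial_power_lipschitz:
  assumes "\<Xi>0 > 0" "\<xi> \<in> cballn n \<Xi>0" "\<eta> \<in> cballn n \<Xi>0"
  shows "\<bar>(enorm n \<eta> / \<Xi>0) ^ k - (enorm n \<xi> / \<Xi>0) ^ k\<bar> \<le> (real k / \<Xi>0) * edist n \<eta> \<xi>"
proof -
  have "\<bar>enorm n \<zeta> / \<Xi>0\<bar> \<le> 1" if "\<zeta> \<in> cballn n \<Xi>0" for \<zeta>
    using radial_power_le_one[OF assms(1) that, of 1] by simp
  then have "\<bar>(enorm n \<eta> / \<Xi>0) ^ k - (enorm n \<xi> / \<Xi>0) ^ k\<bar>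
      \<le> real k * \<bar>enorm n \<eta> / \<Xi>0 - enorm n \<xi> / \<Xi>0\<bar>"
    using norm_power_diff[of "enorm n \<eta> / \<Xi>0" "enorm n \<xi> / \<Xi>0" k] assms(2,3) by simp
  also have "\<dots> = real k * \<bar>enorm n \<eta> - enorm n \<xi>\<bar> / \<Xi>0"
    using assms(1) by (simp add: diff_divide_distrib[symmetric])
  also have "\<dots> \<le> real k * edist n \<eta> \<xi> / \<Xi>0"
    using enorm_diff_le_edist[of n \<eta> \<xi>] assms(1)
    by (intro divide_right_mono mult_left_mono) auto
  finally show ?thesis
    by simp
qed

lemma kelvin_embed_dim:
  assumes "2 \<le> n" "n \<le> m" "\<Xi>0 > 0" "enorm n \<eta> \<noteq> 0"
  shows "(enorm n \<eta> / \<Xi>0) ^ (m - n) * kelvin \<Xi>0 m (flat a m Q) (embed_dim n m \<eta>)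
         = kelvin \<Xi>0 n (flat a n Q) \<eta>"
proof -
  have dims: "1 \<le> n" "n \<le> m" "m - 2 = (m - n) + (n - 2)"
    using assms by auto
  let ?r = "enorm n \<eta>"
  have "?r > 0"
    using enorm_nonneg[of n \<eta>] assms(4) by linarith
  have "(?r / \<Xi>0) ^ (m - n) * (\<Xi>0 / ?r) ^ (m - 2)
      = ((?r / \<Xi>0) * (\<Xi>0 / ?r)) ^ (m - n) * (\<Xi>0 / ?r) ^ (n - 2)"
    unfolding dims(3) power_add power_mult_distrib by simp
  also have "\<dots> = (\<Xi>0 / ?r) ^ (n - 2)"
    using \<open>?r > 0\<close> assms(3) by simp
  finally show ?thesis
    unfolding kelvin_def enorm_embed_dim[OF dims(1,2)] embed_dim_scale flat_embed_dim[OF dims(1,2)]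
    by (simp add: mult.assoc[symmetric])
qed

lemma kelvin_extension_lower_dim:
  assumes "2 \<le> n" "n \<le> m" "\<Xi>0 > 0"
    and F: "\<forall>\<eta>\<in>cballn m \<Xi>0. enorm m \<eta> \<noteq> 0 \<longrightarrow> F \<eta> = kelvin \<Xi>0 m (flat a m Q) \<eta>"
  shows "\<forall>\<eta>\<in>cballn n \<Xi>0. enorm n \<eta> \<noteq> 0 \<longrightarrow>
    (enorm n \<eta> / \<Xi>0) ^ (m - n) * F (embed_dim n m \<eta>) = kelvin \<Xi>0 n (flat a n Q) \<eta>"
proof (intro ballI impI)
  fix \<eta> assume "\<eta> \<in> cballn n \<Xi>0" "enorm n \<eta> \<noteq> 0"
  have "1 \<le> n" using assms(1) by simp
  with \<open>\<eta> \<in> cballn n \<Xi>0\<close> \<open>enorm n \<eta> \<noteq> 0\<close>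
  have "F (embed_dim n m \<eta>) = kelvin \<Xi>0 m (flat a m Q) (embed_dim n m \<eta>)"
    using F embed_dim_in_cballn enorm_embed_dim assms(2) by simp
  then show "(enorm n \<eta> / \<Xi>0) ^ (m - n) * F (embed_dim n m \<eta>) = kelvin \<Xi>0 n (flat a n Q) \<eta>"
    using kelvin_embed_dim[OF assms(1-3) \<open>enorm n \<eta> \<noteq> 0\<close>] by simp
qed

lemma CD0_lower_dim:
  assumes "1 \<le> n" "n \<le> m" "CD0 a m R Q"
  shows "CD0 a n R Q"
proof -
  have "flat a n Q = (\<lambda>\<xi>. flat a m Q (embed_dim n m \<xi>))"
    using flat_embed_dim[OF assms(1,2)] by simp
  then show ?thesis
    using assms(3) C0_comp_embed_dim[OF assms(1,2)] unfolding CD0_def by simp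
qed

lemma CDa_lower_dim:
  assumes "1 \<le> n" "n \<le> m" "CDa \<alpha> a m R Q"
  shows "CDa \<alpha> a n R Q"
proof -
  have "flat a n Q = (\<lambda>\<xi>. flat a m Q (embed_dim n m \<xi>))"
    using flat_embed_dim[OF assms(1,2)] by simp
  then show ?thesis
    using assms(3) C0a_comp_embed_dim[OF assms(1,2)] unfolding CDa_def by simp
qed

lemma CE0_lower_dim:
  assumes "2 \<le> n" "n \<le> m" "\<Xi>0 > 0" "CE0 a \<Xi>0 m Q"
  shows "CE0 a \<Xi>0 n Q"
proof -
  obtain F where "C0 m \<Xi>0 F"
    and F: "\<forall>\<eta>\<in>cballn m \<Xi>0. enorm m \<eta> \<noteq> 0 \<longrightarrow> F \<eta> = kelvin \<Xi>0 m (flat a m Q) \<eta>"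
    and "even_z Q"
    using assms(4) unfolding CE0_def by blast
  have "C0 n \<Xi>0 (\<lambda>\<eta>. (enorm n \<eta> / \<Xi>0) ^ (m - n) * F (embed_dim n m \<eta>))"
  proof (rule C0_lipschitz_mult[where B = 1 and L = "real (m - n) / \<Xi>0"])
    show "C0 n \<Xi>0 (\<lambda>\<eta>. F (embed_dim n m \<eta>))"
      using assms(1,2) \<open>C0 m \<Xi>0 F\<close> by (intro C0_comp_embed_dim) auto
  qed (use assms(3) radial_power_le_one radial_power_lipschitz in auto)
  then show ?thesis
    unfolding CE0_def using \<open>even_z Q\<close> kelvin_extension_lower_dim[OF assms(1-3) F] by blast
qed

lemma CEa_lower_dim:
  assumes "2 \<le> n" "n \<le> m" "\<Xi>0 > 0" "\<alpha> \<le> 1" "CEa \<alpha> a \<Xi>0 m Q"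
  shows "CEa \<alpha> a \<Xi>0 n Q"
proof -
  obtain F where "C0a \<alpha> m \<Xi>0 F"
    and F: "\<forall>\<eta>\<in>cballn m \<Xi>0. enorm m \<eta> \<noteq> 0 \<longrightarrow> F \<eta> = kelvin \<Xi>0 m (flat a m Q) \<eta>"
    and "even_z Q"
    using assms(5) unfolding CEa_def by blast
  have "C0a \<alpha> n \<Xi>0 (\<lambda>\<eta>. (enorm n \<eta> / \<Xi>0) ^ (m - n) * F (embed_dim n m \<eta>))"
  proof (rule C0a_lipschitz_mult[where B = 1 and L = "real (m - n) / \<Xi>0"])
    show "C0a \<alpha> n \<Xi>0 (\<lambda>\<eta>. F (embed_dim n m \<eta>))"
      using assms(1,2) \<open>C0a \<alpha> m \<Xi>0 F\<close> by (intro C0a_comp_embed_dim) auto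
  qed (use assms(3,4) radial_power_le_one radial_power_lipschitz in auto)
  then show ?thesis
    unfolding CEa_def using \<open>even_z Q\<close> kelvin_extension_lower_dim[OF assms(1-3) F] by blast
qed

theorem proposition9:
  fixes a \<Xi>0 \<alpha> :: real and chi :: "real \<Rightarrow> real" and m n :: nat
    and Q :: "real \<Rightarrow> real \<Rightarrow> real"
  assumes "a > 0" "\<Xi>0 > 0" "0 < \<alpha>" "\<alpha> < 1" "cutoff chi"
    and "m \<ge> n" "n \<ge> 3"
  shows "(Cn0 chi a \<Xi>0 m Q \<longrightarrow> Cn0 chi a \<Xi>0 n Q) \<and>
         (Cna \<alpha> chi a \<Xi>0 m Q \<longrightarrow> Cna \<alpha> chi a \<Xi>0 n Q)"
proof -
  have "1 \<le> n" "2 \<le> n" "\<alpha> \<le> 1"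
    using assms by auto
  show ?thesis
    unfolding Cn0_def Cna_def
    using CD0_lower_dim[OF \<open>1 \<le> n\<close> \<open>m \<ge> n\<close>] CDa_lower_dim[OF \<open>1 \<le> n\<close> \<open>m \<ge> n\<close>]
      CE0_lower_dim[OF \<open>2 \<le> n\<close> \<open>m \<ge> n\<close> \<open>\<Xi>0 > 0\<close>]
      CEa_lower_dim[OF \<open>2 \<le> n\<close> \<open>m \<ge> n\<close> \<open>\<Xi>0 > 0\<close> \<open>\<alpha> \<le> 1\<close>]
    by meson
qed

end
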